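(* $\frac{n^2}{12}+O(n)\le\mathrm{sat}_\circlearrowright(n,D_2)\le\frac{5n^2}{24}+O(n)$.
   Context: $\Omega_n=\{v_0,\dots,v_{n-1}\}$ with cyclic order $v_0<\dots<v_{n-1}<v_0$ (indices mod $n$). A $3$-cgh on $\Omega_n$ is a family of $3$-subsets of $\Omega_n$. For a $3$-cgh $F$, $H$ contains a copy of $F$ if there is an injection of the vertex set of $F$ into $\Omega_n$ preserving the cyclic order and mapping every edge of $F$ to an edge of $H$. $H$ is $F$-saturated if it contains no copy of $F$ but $H\cup\{e\}$ does for every $e\in\binom{\Omega_n}{3}\setminus H$; $\mathrm{sat}_\circlearrowright(n,F)$ is the minimum number of edges of an $F$-saturated $3$-cgh on $\Omega_n$. $D_2$ is the $3$-cgh on $\Omega_4$ with edges $\{v_0,v_1,v_2\}$ and $\{v_0,v_1,v_3\}$ (two triples sharing a pair whose remaining vertices lie on the same side of the chord through the shared pair). *)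

theory Defs
  imports Complex_Main
begin

text \<open>Vertices of \<Omega>_n are 0,...,n-1 (v_i = i), with the cyclic order
 0 < 1 < ... < n-1 < 0. A 3-cgh on \<Omega>_n is a set of 3-subsets of {..<n}.\<close>

definition triples :: "nat \<Rightarrow> nat set set" where
  "triples n = {e. e \<subseteq> {..<n} \<and> card e = 3}"

text \<open>An injection f of \<Omega>_k into \<Omega>_n preserving the cyclic order:
 after some rotation of \<Omega>_n, f becomes strictly increasing on 0..k-1.\<close>
definition cyc_embedding :: "nat \<Rightarrow> nat \<Rightarrow> (nat \<Rightarrow> nat) \<Rightarrow> bool" where
  "cyc_embedding k n f \<longleftrightarrow>
     (\<forall>i<k. f i < n) \<and> inj_on f {..<k} \<and>
     (\<exists>s. \<forall>i j. i < j \<and> j < k \<longrightarrow> (f i + s) mod n < (f j + s) mod n)"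

definition contains_copy :: "nat \<Rightarrow> nat set set \<Rightarrow> nat \<Rightarrow> nat set set \<Rightarrow> bool" where
  "contains_copy n H k F \<longleftrightarrow>
     (\<exists>f. cyc_embedding k n f \<and> (\<forall>e\<in>F. f ` e \<in> H))"

definition saturated :: "nat \<Rightarrow> nat \<Rightarrow> nat set set \<Rightarrow> nat set set \<Rightarrow> bool" where
  "saturated n k F H \<longleftrightarrow>
     H \<subseteq> triples n \<and> \<not> contains_copy n H k F \<and>
     (\<forall>e \<in> triples n - H. contains_copy n (insert e H) k F)"

definition sat_cyc :: "nat \<Rightarrow> nat \<Rightarrow> nat set set \<Rightarrow> nat" where
  "sat_cyc n k F = (LEAST m. \<exists>H. saturated n k F H \<and> card H = m)"

definition D2 :: "nat set set" where
  "D2 = {{0,1,2},{0,1,3}}"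

end

theory Submission
  imports Defs
begin

(* A copy of D2 consists of two edges {u,v,w} and {u,v,z}, w \<noteq> z, such that uv is a side of
   both triangles uvw and uvz, i.e. w and z lie on the same side of the chord uv.

   Lower bound: in a saturated H every non-edge forms such a pair with some edge. For an edge
   with cyclic gaps g1, g2, g3 (g1 + g2 + g3 = n) the number of such partners along its three
   sides is at most (n - 1 - g1) + (n - 1 - g2) + (n - 1 - g3) = 2n - 3, so
   binom(n,3) \<le> |H| (2n - 3).

   Upper bound: for 5a < n \<le> 6a take the edges {x, x+d, x+2d+a} mod n with 1 \<le> d \<le> a, i.e.
   the triples having a gap d \<le> a followed (cyclically) by the gap d + a; there are at most na
   of them. Two such edges sharing a side would force n \<le> 5a. A missing triple has a gap
   g \<le> 2a, and the triple on that side with gaps (g, g + a) or (g - a, g) is an edge completing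
   a copy of D2. *)

section \<open>Cyclic distance and cyclic order\<close>

definition arc :: "nat \<Rightarrow> nat \<Rightarrow> nat \<Rightarrow> nat" where
  "arc n u v = nat ((int v - int u) mod int n)"

lemma arc_eq: "u < n \<Longrightarrow> v < n \<Longrightarrow> arc n u v = (if u \<le> v then v - u else v + n - u)"
proof -
  assume "u < n" "v < n"
  show ?thesis
  proof (cases "u \<le> v")
    case True
    with \<open>v < n\<close> show ?thesis by (simp add: arc_def of_nat_diff)
  next
    case False
    then have "(int v - int u) mod int n = (int v - int u + int n) mod int n" by simp
    also have "\<dots> = int v - int u + int n"
      using False \<open>u < n\<close> by (intro mod_pos_pos_trivial) auto
    finally show ?thesis using False by (simp add: arc_def)
  qed
qed

lemma arc_mod_shift: "arc n ((x + s) mod n) ((y + s) mod n) = arc n x y"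
proof -
  have "(int ((y + s) mod n) - int ((x + s) mod n)) mod int n
      = ((int y + int s) - (int x + int s)) mod int n"
    unfolding of_nat_mod of_nat_add by (rule mod_diff_eq)
  then show ?thesis by (simp add: arc_def)
qed

lemma arc_mod_add: "arc n u ((u + k) mod n) = k mod n"
proof -
  have "(int ((u + k) mod n) - int u) mod int n = ((int u + int k) - int u) mod int n"
    unfolding of_nat_mod of_nat_add by (rule mod_diff_left_eq)
  then show ?thesis by (simp add: arc_def nat_mod_as_int)
qed

lemma arc_self [simp]: "arc n u u = 0"
  by (simp add: arc_def)

lemma arc_lt: "0 < n \<Longrightarrow> arc n u v < n"
  unfolding arc_def by (simp add: nat_less_iff)

lemma mod_add_arc: "u < n \<Longrightarrow> v < n \<Longrightarrow> (u + arc n u v) mod n = v"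
  by (simp add: arc_eq le_mod_geq)

lemma shift_mod_eq_arc: "u < n \<Longrightarrow> v < n \<Longrightarrow> (v + (n - u)) mod n = arc n u v"
  by (simp add: arc_eq le_mod_geq)

lemma arc_inject: "u < n \<Longrightarrow> v < n \<Longrightarrow> w < n \<Longrightarrow> arc n u v = arc n u w \<Longrightarrow> v = w"
  by (metis mod_add_arc)

definition cyc_ordered :: "nat \<Rightarrow> nat \<Rightarrow> nat \<Rightarrow> nat \<Rightarrow> bool" where
  "cyc_ordered n u v w \<longleftrightarrow> 0 < arc n u v \<and> arc n u v < arc n u w"

lemma cyc_ordered_iff:
  "u < n \<Longrightarrow> v < n \<Longrightarrow> w < n \<Longrightarrow>
    cyc_ordered n u v w \<longleftrightarrow> u < v \<and> v < w \<or> v < w \<and> w < u \<or> w < u \<and> u < v"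
  by (auto simp: cyc_ordered_def arc_eq)

lemma cyc_ordered_rotate:
  "cyc_ordered n u v w \<Longrightarrow> u < n \<Longrightarrow> v < n \<Longrightarrow> w < n \<Longrightarrow> cyc_ordered n v w u"
  by (auto simp: cyc_ordered_iff)

lemma cyc_ordered_arcs:
  assumes "cyc_ordered n u v w" "u < n" "v < n" "w < n"
  shows "arc n v w = arc n u w - arc n u v" "arc n w u = n - arc n u w"
  using assms by (auto simp: cyc_ordered_def arc_eq split: if_splits)

lemma cyc_ordered_arc_sum:
  assumes "cyc_ordered n u v w" "u < n" "v < n" "w < n"
  shows "arc n u v + arc n v w + arc n w u = n"
  using assms by (auto simp: cyc_ordered_def arc_eq split: if_splits)

lemma cyc_ordered_same_base:
  assumes "cyc_ordered n u v w" "cyc_ordered n u v' w'" "{u, v, w} = {u, v', w'}"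
    and "u < n" "v < n" "w < n" "v' < n" "w' < n"
  shows "v' = v \<and> w' = w"
  using assms by (auto simp: cyc_ordered_iff doubleton_eq_iff insert_eq_iff)

lemma cyc_ordered_rotations:
  assumes "cyc_ordered n u v w" "cyc_ordered n u' v' w'" "{u, v, w} = {u', v', w'}"
    and "u < n" "v < n" "w < n" "u' < n" "v' < n" "w' < n"
  shows "(u', v', w') \<in> {(u, v, w), (v, w, u), (w, u, v)}"
proof -
  have rot: "cyc_ordered n v w u" "cyc_ordered n w u v"
    using assms(1,4-6) by (auto intro: cyc_ordered_rotate)
  have "u' \<in> {u, v, w}" using assms(3) by blast
  then consider "u' = u" | "u' = v" | "u' = w" by blast
  then show ?thesis
  proof cases
    case 1
    then show ?thesis
      using cyc_ordered_same_base[of n u v w v' w'] assms by simp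
  next
    case 2
    then show ?thesis
      using cyc_ordered_same_base[of n v w u v' w'] rot assms by (simp add: insert_commute)
  next
    case 3
    then show ?thesis
      using cyc_ordered_same_base[of n w u v v' w'] rot assms by (simp add: insert_commute)
  qed
qed

section \<open>Copies of D2\<close>

(* Every witness shift s can be replaced by n - f 0, which moves f 0 to the origin. *)
lemma cyc_embedding_iff:
  "cyc_embedding k n f \<longleftrightarrow>
     (\<forall>i<k. f i < n) \<and> (\<forall>i j. i < j \<and> j < k \<longrightarrow> arc n (f 0) (f i) < arc n (f 0) (f j))"
  (is "_ \<longleftrightarrow> ?bounded \<and> ?mono")
proof
  assume "cyc_embedding k n f"
  then obtain s where bounded: ?bounded and
    shifted: "\<And>i j. i < j \<Longrightarrow> j < k \<Longrightarrow> (f i + s) mod n < (f j + s) mod n"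
    unfolding cyc_embedding_def by blast
  have arc_shifted: "arc n (f 0) (f i) = (f i + s) mod n - (f 0 + s) mod n" if "i < k" for i
  proof -
    have "(f 0 + s) mod n \<le> (f i + s) mod n"
      using shifted[of 0 i] that by (cases i) auto
    moreover have "(f i + s) mod n < n"
      using bounded that by (metis gr_zeroI mod_less_divisor not_less0)
    ultimately show ?thesis by (metis arc_mod_shift arc_eq order_le_less_trans)
  qed
  have ?mono
  proof (intro allI impI)
    fix i j assume ij: "i < j \<and> j < k"
    have "(f 0 + s) mod n \<le> (f i + s) mod n"
      using shifted[of 0 i] ij by (cases i) auto
    with shifted[of i j] ij show "arc n (f 0) (f i) < arc n (f 0) (f j)"
      by (simp add: arc_shifted)
  qed
  with bounded show "?bounded \<and> ?mono" ..
next
  assume "?bounded \<and> ?mono"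
  then have bounded: ?bounded and mono: ?mono by blast+
  show "cyc_embedding k n f"
  proof (cases k)
    case 0
    then show ?thesis by (simp add: cyc_embedding_def)
  next
    case (Suc m)
    then have shift: "(f i + (n - f 0)) mod n = arc n (f 0) (f i)" if "i < k" for i
      using bounded that by (intro shift_mod_eq_arc) auto
    have "inj_on f {..<k}"
    proof (rule inj_onI)
      fix i j assume "i \<in> {..<k}" "j \<in> {..<k}" "f i = f j"
      then show "i = j"
        using mono[rule_format, of i j] mono[rule_format, of j i]
        by (cases i j rule: linorder_cases) auto
    qed
    moreover have "(f i + (n - f 0)) mod n < (f j + (n - f 0)) mod n" if "i < j" "j < k" for i j
      using mono that by (simp add: shift)
    ultimately show ?thesis
      using bounded unfolding cyc_embedding_def by blast
  qed
qed

lemma contains_D2I: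
  assumes "a < n" "b < n" "c < n" "d < n"
    and "0 < arc n a b" "arc n a b < arc n a c" "arc n a c < arc n a d"
    and "{a, b, c} \<in> H" "{a, b, d} \<in> H"
  shows "contains_copy n H 4 D2"
proof -
  let ?f = "(!) [a, b, c, d]"
  have index: "i = 0 \<or> i = 1 \<or> i = 2 \<or> i = 3" if "i < 4" for i :: nat
    using that by auto
  have "cyc_embedding 4 n ?f"
    unfolding cyc_embedding_iff
  proof (intro conjI allI impI)
    show "?f i < n" if "i < 4" for i
      using index[OF that] assms(1-4) by auto
    show "arc n (?f 0) (?f i) < arc n (?f 0) (?f j)" if "i < j \<and> j < 4" for i j
      using index[of i] index[of j] that assms(5-7) by auto
  qed
  moreover have "\<forall>e\<in>D2. ?f ` e \<in> H"
    using assms(8,9) by (simp add: D2_def)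
  ultimately show ?thesis
    unfolding contains_copy_def by blast
qed

lemma contains_D2_iff:
  "contains_copy n H 4 D2 \<longleftrightarrow>
    (\<exists>a b c d. a < n \<and> b < n \<and> c < n \<and> d < n \<and>
      cyc_ordered n a b c \<and> cyc_ordered n a b d \<and> c \<noteq> d \<and> {a, b, c} \<in> H \<and> {a, b, d} \<in> H)"
  (is "_ \<longleftrightarrow> (\<exists>a b c d. ?D2 a b c d)")
proof
  assume "contains_copy n H 4 D2"
  then obtain f where emb: "cyc_embedding 4 n f" and edges: "\<forall>e\<in>D2. f ` e \<in> H"
    unfolding contains_copy_def by blast
  have bounded: "\<forall>i<4. f i < n"
    and mono: "\<And>i j. i < j \<Longrightarrow> j < 4 \<Longrightarrow> arc n (f 0) (f i) < arc n (f 0) (f j)"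
    using emb unfolding cyc_embedding_iff by auto
  note mono[of 0 1] mono[of 1 2] mono[of 2 3]
  moreover have "{f 0, f 1, f 2} \<in> H" "{f 0, f 1, f 3} \<in> H"
    using edges by (simp_all add: D2_def)
  ultimately have "?D2 (f 0) (f 1) (f 2) (f 3)"
    using bounded by (auto simp: cyc_ordered_def)
  then show "\<exists>a b c d. ?D2 a b c d" by blast
next
  assume "\<exists>a b c d. ?D2 a b c d"
  then obtain a b c d where D2: "?D2 a b c d" by blast
  then have "arc n a c \<noteq> arc n a d" by (metis arc_inject)
  then consider "arc n a c < arc n a d" | "arc n a d < arc n a c" by linarith
  then show "contains_copy n H 4 D2"
    by cases (use D2 in \<open>auto simp: cyc_ordered_def intro: contains_D2I\<close>)
qed

lemma cyc_ordered_distinct: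
  "cyc_ordered n u v w \<Longrightarrow> u < n \<Longrightarrow> v < n \<Longrightarrow> w < n \<Longrightarrow> u \<noteq> v \<and> v \<noteq> w \<and> w \<noteq> u"
  by (auto simp: cyc_ordered_iff)

lemma cyc_ordered_in_triples:
  "cyc_ordered n u v w \<Longrightarrow> u < n \<Longrightarrow> v < n \<Longrightarrow> w < n \<Longrightarrow> {u, v, w} \<in> triples n"
  by (drule (3) cyc_ordered_distinct) (auto simp: triples_def card_insert_if)

lemma triples_cyc_ordered:
  assumes "e \<in> triples n"
  obtains u v w where "u < n" "v < n" "w < n" "cyc_ordered n u v w" "e = {u, v, w}"
proof -
  obtain x y z where e: "e = {x, y, z}" "x \<noteq> y" "y \<noteq> z" "x \<noteq> z"
    using assms unfolding triples_def card_3_iff by blast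
  moreover have "x < n" "y < n" "z < n"
    using assms e unfolding triples_def by auto
  ultimately have "cyc_ordered n x y z \<or> cyc_ordered n x z y"
    by (auto simp: cyc_ordered_iff)
  then show thesis
    using that \<open>x < n\<close> \<open>y < n\<close> \<open>z < n\<close> e(1) by (metis insert_commute)
qed

section \<open>A saturated D2-free construction\<close>

definition gap_pair :: "nat \<Rightarrow> nat \<Rightarrow> nat \<Rightarrow> bool" where
  "gap_pair a x y \<longleftrightarrow> 1 \<le> x \<and> x \<le> a \<and> y = x + a"

definition admissible_gaps :: "nat \<Rightarrow> nat \<Rightarrow> nat \<Rightarrow> nat \<Rightarrow> bool" where
  "admissible_gaps a x y z \<longleftrightarrow> gap_pair a x y \<or> gap_pair a y z \<or> gap_pair a z x"

definition gap_hypergraph :: "nat \<Rightarrow> nat \<Rightarrow> nat set set" where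
  "gap_hypergraph n a = (\<lambda>(x, d). {x, (x + d) mod n, (x + 2 * d + a) mod n}) ` ({..<n} \<times> {1..a})"

lemma card_gap_hypergraph: "card (gap_hypergraph n a) \<le> n * a"
  unfolding gap_hypergraph_def
  by (rule order_trans[OF card_image_le]) (simp_all add: card_cartesian_product)

lemma gap_hypergraph_edgeI:
  assumes "cyc_ordered n u v w" "u < n" "v < n" "w < n" "gap_pair a (arc n u v) (arc n v w)"
  shows "{u, v, w} \<in> gap_hypergraph n a"
proof -
  let ?d = "arc n u v"
  have "arc n u w = 2 * ?d + a"
    using assms cyc_ordered_arcs(1)[OF assms(1-4)] by (auto simp: cyc_ordered_def gap_pair_def)
  then have "(u + 2 * ?d + a) mod n = w"
    using mod_add_arc[OF assms(2,4)] by (simp add: add.assoc)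
  moreover have "(u + ?d) mod n = v"
    using mod_add_arc[OF assms(2,3)] .
  moreover have "(u, ?d) \<in> {..<n} \<times> {1..a}"
    using assms(2,5) by (simp add: gap_pair_def)
  ultimately show ?thesis
    unfolding gap_hypergraph_def by (auto intro!: image_eqI[where x = "(u, ?d)"])
qed

lemma gap_hypergraph_edge_arcs:
  assumes "3 * a < n" "x < n" "1 \<le> d" "d \<le> a"
  defines "y \<equiv> (x + d) mod n" and "z \<equiv> (x + 2 * d + a) mod n"
  shows "cyc_ordered n x y z" "y < n" "z < n"
    and "arc n x y = d" "arc n y z = d + a" "arc n z x = n - (2 * d + a)"
proof -
  have xz: "arc n x z = 2 * d + a"
    using assms unfolding z_def by (simp add: arc_mod_add add.assoc)
  show xy: "arc n x y = d" and "y < n" "z < n"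
    using assms unfolding y_def z_def by (simp_all add: arc_mod_add)
  then show xyz: "cyc_ordered n x y z"
    using assms(3) xz by (simp add: cyc_ordered_def)
  show "arc n y z = d + a" "arc n z x = n - (2 * d + a)"
    using cyc_ordered_arcs[OF xyz assms(2) \<open>y < n\<close> \<open>z < n\<close>] xy xz by simp_all
qed

lemma mem_gap_hypergraph_iff:
  assumes "3 * a < n" "cyc_ordered n u v w" "u < n" "v < n" "w < n"
  shows "{u, v, w} \<in> gap_hypergraph n a \<longleftrightarrow>
    admissible_gaps a (arc n u v) (arc n v w) (arc n w u)"
proof
  assume "{u, v, w} \<in> gap_hypergraph n a"
  then obtain x d where xd: "x < n" "1 \<le> d" "d \<le> a"
    and uvw: "{u, v, w} = {x, (x + d) mod n, (x + 2 * d + a) mod n}"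
    unfolding gap_hypergraph_def by auto
  define y z where "y = (x + d) mod n" and "z = (x + 2 * d + a) mod n"
  note xyz = gap_hypergraph_edge_arcs[OF assms(1) xd, folded y_def z_def]
  have "(u, v, w) \<in> {(x, y, z), (y, z, x), (z, x, y)}"
    using cyc_ordered_rotations[OF xyz(1) assms(2)] uvw assms(3-5) xd xyz
    unfolding y_def z_def by simp
  then show "admissible_gaps a (arc n u v) (arc n v w) (arc n w u)"
    using xd xyz by (auto simp: admissible_gaps_def gap_pair_def)
next
  have rot: "cyc_ordered n v w u" "cyc_ordered n w u v"
    using assms(2-5) by (auto intro: cyc_ordered_rotate)
  assume "admissible_gaps a (arc n u v) (arc n v w) (arc n w u)"
  then show "{u, v, w} \<in> gap_hypergraph n a"
    unfolding admissible_gaps_def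
    using gap_hypergraph_edgeI[OF assms(2-5)] gap_hypergraph_edgeI[OF rot(1) assms(4,5,3)]
      gap_hypergraph_edgeI[OF rot(2) assms(5,3,4)]
    by (auto simp: insert_commute)
qed

lemma admissible_gaps_extension_unique:
  assumes "5 * a < n" "0 < x" "x < y" "x < z" "y < n" "z < n"
    and "admissible_gaps a x (y - x) (n - y)" "admissible_gaps a x (z - x) (n - z)"
  shows "y = z"
  using assms unfolding admissible_gaps_def gap_pair_def by linarith

lemma gap_hypergraph_D2_free:
  assumes "5 * a < n"
  shows "\<not> contains_copy n (gap_hypergraph n a) 4 D2"
proof
  assume "contains_copy n (gap_hypergraph n a) 4 D2"
  then obtain u v w z where lt: "u < n" "v < n" "w < n" "z < n"
    and ord: "cyc_ordered n u v w" "cyc_ordered n u v z" "w \<noteq> z"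
    and edges: "{u, v, w} \<in> gap_hypergraph n a" "{u, v, z} \<in> gap_hypergraph n a"
    unfolding contains_D2_iff by blast
  have "admissible_gaps a (arc n u v) (arc n u w - arc n u v) (n - arc n u w)"
    using edges(1) mem_gap_hypergraph_iff[OF _ ord(1) lt(1-3)]
      cyc_ordered_arcs[OF ord(1) lt(1-3)] assms by simp
  moreover have "admissible_gaps a (arc n u v) (arc n u z - arc n u v) (n - arc n u z)"
    using edges(2) mem_gap_hypergraph_iff[OF _ ord(2) lt(1,2,4)]
      cyc_ordered_arcs[OF ord(2) lt(1,2,4)] assms by simp
  moreover have "arc n u w \<noteq> arc n u z"
    using ord(3) lt arc_inject by blast
  ultimately show False
    using admissible_gaps_extension_unique[OF assms] ord(1,2) lt arc_lt[of n u]
    by (auto simp: cyc_ordered_def)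
qed

lemma gap_hypergraph_extend:
  assumes a: "1 \<le> a" "5 * a < n"
    and ord: "cyc_ordered n u v w" "u < n" "v < n" "w < n"
    and short: "arc n u v \<le> 2 * a"
    and missing: "\<not> admissible_gaps a (arc n u v) (arc n v w) (arc n w u)"
  shows "\<exists>z<n. cyc_ordered n u v z \<and> z \<noteq> w \<and> {u, v, z} \<in> gap_hypergraph n a"
proof -
  let ?g = "arc n u v"
  have g: "0 < ?g" "?g < arc n u w" using ord(1) by (simp_all add: cyc_ordered_def)
  have arcs: "arc n v w = arc n u w - ?g" "arc n w u = n - arc n u w"
    using cyc_ordered_arcs[OF ord] by simp_all
  define z where "z = (u + (if ?g \<le> a then 2 * ?g + a else n + a - ?g)) mod n"
  have z: "z < n" "arc n u z = (if ?g \<le> a then 2 * ?g + a else n + a - ?g)"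
    using a short ord(2) unfolding z_def by (simp_all add: arc_mod_add)
  then have uvz: "cyc_ordered n u v z"
    using a short g by (simp add: cyc_ordered_def split: if_split_asm)
  have arcs_z: "arc n v z = arc n u z - ?g" "arc n z u = n - arc n u z"
    using cyc_ordered_arcs[OF uvz ord(2,3) z(1)] by simp_all
  have "{u, v, z} \<in> gap_hypergraph n a"
  proof (cases "?g \<le> a")
    case True
    then show ?thesis
      using gap_hypergraph_edgeI[OF uvz ord(2,3) z(1), where a = a] g z arcs_z
      by (simp add: gap_pair_def)
  next
    case False
    have "cyc_ordered n z u v"
      using uvz ord(2,3) z(1) by (auto intro: cyc_ordered_rotate)
    moreover have "arc n z u = ?g - a"
      using arcs_z(2) z(2) False a short by simp
    ultimately have "{z, u, v} \<in> gap_hypergraph n a"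
      using gap_hypergraph_edgeI[OF _ z(1) ord(2,3), where a = a] False short
      by (simp add: gap_pair_def le_diff_conv)
    then show ?thesis by (simp add: insert_commute)
  qed
  moreover have "z \<noteq> w"
  proof
    assume "z = w"
    then show False
      using missing arcs arcs_z g z a short
      by (auto simp: admissible_gaps_def gap_pair_def split: if_splits)
  qed
  ultimately show ?thesis
    using uvz z(1) by blast
qed

lemma admissible_gaps_rotate: "admissible_gaps a y z x \<longleftrightarrow> admissible_gaps a x y z"
  unfolding admissible_gaps_def by blast

lemma gap_hypergraph_saturated:
  assumes a: "1 \<le> a" "5 * a < n" "n \<le> 6 * a"
  shows "saturated n 4 D2 (gap_hypergraph n a)"
  unfolding saturated_def
proof (intro conjI ballI)
  show "gap_hypergraph n a \<subseteq> triples n"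
  proof
    fix e assume "e \<in> gap_hypergraph n a"
    then obtain x d where "x < n" "1 \<le> d" "d \<le> a" "e = {x, (x + d) mod n, (x + 2 * d + a) mod n}"
      unfolding gap_hypergraph_def by auto
    with gap_hypergraph_edge_arcs[of a n x d] a show "e \<in> triples n"
      by (simp add: cyc_ordered_in_triples)
  qed
  show "\<not> contains_copy n (gap_hypergraph n a) 4 D2"
    using gap_hypergraph_D2_free a(2) .
  fix e assume e: "e \<in> triples n - gap_hypergraph n a"
  have copy: "contains_copy n (insert e (gap_hypergraph n a)) 4 D2"
    if ord: "cyc_ordered n u v w" "u < n" "v < n" "w < n" and "e = {u, v, w}"
      and gaps: "arc n u v \<le> 2 * a" "\<not> admissible_gaps a (arc n u v) (arc n v w) (arc n w u)"
    for u v w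
  proof -
    obtain z where "z < n" "cyc_ordered n u v z" "z \<noteq> w" "{u, v, z} \<in> gap_hypergraph n a"
      using gap_hypergraph_extend[OF a(1,2) ord gaps] by blast
    with ord \<open>e = {u, v, w}\<close> show ?thesis
      unfolding contains_D2_iff by blast
  qed
  obtain u v w where uvw: "u < n" "v < n" "w < n" "cyc_ordered n u v w" "e = {u, v, w}"
    using e triples_cyc_ordered by blast
  have rot: "cyc_ordered n v w u" "cyc_ordered n w u v"
    using uvw by (auto intro: cyc_ordered_rotate)
  have missing: "\<not> admissible_gaps a (arc n u v) (arc n v w) (arc n w u)"
    using e uvw mem_gap_hypergraph_iff[of a n u v w] a by auto
  have "arc n u v \<le> 2 * a \<or> arc n v w \<le> 2 * a \<or> arc n w u \<le> 2 * a"
    using cyc_ordered_arc_sum[OF uvw(4,1-3)] a(3) by linarith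
  then show "contains_copy n (insert e (gap_hypergraph n a)) 4 D2"
    using copy[OF uvw(4,1-3,5)] copy[OF rot(1) uvw(2,3,1)] copy[OF rot(2) uvw(3,1,2)]
      missing uvw(5) by (auto simp: admissible_gaps_rotate insert_commute)
qed

section \<open>Counting bound for saturated hypergraphs\<close>

definition pair_extensions :: "nat \<Rightarrow> nat \<Rightarrow> nat \<Rightarrow> nat set set" where
  "pair_extensions n u v = (\<lambda>z. {u, v, z}) ` {z. z < n \<and> cyc_ordered n u v z}"

definition D2_partners :: "nat \<Rightarrow> nat set \<Rightarrow> nat set set" where
  "D2_partners n e = {{u, v, z} | u v w z. u < n \<and> v < n \<and> w < n \<and> z < n \<and>
     cyc_ordered n u v w \<and> cyc_ordered n u v z \<and> e = {u, v, w}}"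

lemma finite_D2_partners: "finite (D2_partners n e)"
  by (rule finite_subset[of _ "Pow {..<n}"]) (auto simp: D2_partners_def)

lemma card_pair_extensions:
  assumes "u < n"
  shows "card (pair_extensions n u v) \<le> n - 1 - arc n u v"
proof -
  have "card (pair_extensions n u v) \<le> card {z. z < n \<and> cyc_ordered n u v z}"
    unfolding pair_extensions_def by (rule card_image_le) simp
  also have "\<dots> \<le> card {arc n u v<..<n}"
  proof (rule card_inj_on_le)
    show "inj_on (arc n u) {z. z < n \<and> cyc_ordered n u v z}"
      using assms arc_inject by (intro inj_onI) blast
    show "arc n u ` {z. z < n \<and> cyc_ordered n u v z} \<subseteq> {arc n u v<..<n}"
      using assms arc_lt[of n u] by (auto simp: cyc_ordered_def)
  qed simp
  finally show ?thesis by simp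
qed

lemma card_D2_partners:
  assumes "e \<in> triples n"
  shows "card (D2_partners n e) \<le> 2 * n - 3"
proof -
  obtain u v w where uvw: "u < n" "v < n" "w < n" "cyc_ordered n u v w" "e = {u, v, w}"
    using assms triples_cyc_ordered by blast
  have "D2_partners n e \<subseteq> pair_extensions n u v \<union> pair_extensions n v w \<union> pair_extensions n w u"
  proof
    fix T assume "T \<in> D2_partners n e"
    then obtain u' v' w' z where "u' < n" "v' < n" "w' < n" "z < n"
      and ord: "cyc_ordered n u' v' w'" "cyc_ordered n u' v' z"
      and "e = {u', v', w'}" "T = {u', v', z}"
      unfolding D2_partners_def by blast
    moreover have "(u', v', w') \<in> {(u, v, w), (v, w, u), (w, u, v)}"
      using cyc_ordered_rotations[OF uvw(4) ord(1)] uvw calculation by simp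
    ultimately show "T \<in> pair_extensions n u v \<union> pair_extensions n v w \<union> pair_extensions n w u"
      unfolding pair_extensions_def by auto
  qed
  then have "card (D2_partners n e)
      \<le> card (pair_extensions n u v \<union> pair_extensions n v w \<union> pair_extensions n w u)"
    by (rule card_mono[rotated]) (simp add: pair_extensions_def)
  also have "\<dots> \<le>
      card (pair_extensions n u v) + card (pair_extensions n v w) + card (pair_extensions n w u)"
    by (meson add_mono card_Un_le le_refl order_trans)
  also have "\<dots> \<le> (n - 1 - arc n u v) + (n - 1 - arc n v w) + (n - 1 - arc n w u)"
    using uvw by (intro add_mono card_pair_extensions)
  also have "\<dots> = 2 * n - 3"
    using cyc_ordered_arc_sum[OF uvw(4,1-3)] uvw(1)
      arc_lt[of n u v] arc_lt[of n v w] arc_lt[of n w u]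
    by linarith
  finally show ?thesis .
qed

lemma saturated_D2_partners_cover:
  assumes "saturated n 4 D2 H"
  shows "triples n \<subseteq> (\<Union>e\<in>H. D2_partners n e)"
proof
  fix T assume T: "T \<in> triples n"
  show "T \<in> (\<Union>e\<in>H. D2_partners n e)"
  proof (cases "T \<in> H")
    case True
    obtain u v w where "u < n" "v < n" "w < n" "cyc_ordered n u v w" "T = {u, v, w}"
      using T triples_cyc_ordered by blast
    then have "T \<in> D2_partners n T"
      unfolding D2_partners_def by blast
    with True show ?thesis by blast
  next
    case False
    with assms T have "contains_copy n (insert T H) 4 D2" and free: "\<not> contains_copy n H 4 D2"
      unfolding saturated_def by blast+
    then obtain u v w z where lt: "u < n" "v < n" "w < n" "z < n"
      and ord: "cyc_ordered n u v w" "cyc_ordered n u v z" "w \<noteq> z"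
      and edges: "{u, v, w} \<in> insert T H" "{u, v, z} \<in> insert T H"
      unfolding contains_D2_iff by blast
    have "\<not> ({u, v, w} \<in> H \<and> {u, v, z} \<in> H)"
      using free lt ord unfolding contains_D2_iff by blast
    moreover have "{u, v, w} \<noteq> {u, v, z}"
      using ord lt cyc_ordered_distinct[of n u v w] cyc_ordered_distinct[of n u v z]
      by (auto simp: insert_eq_iff)
    ultimately have "{u, v, w} \<in> H \<and> T = {u, v, z} \<or> {u, v, z} \<in> H \<and> T = {u, v, w}"
      using edges by auto
    then show ?thesis
      using lt ord unfolding D2_partners_def by blast
  qed
qed

lemma saturated_D2_card_lower:
  assumes sat: "saturated n 4 D2 H"
  shows "n choose 3 \<le> card H * (2 * n - 3)"
proof -
  have H: "H \<subseteq> triples n"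
    using sat unfolding saturated_def by blast
  then have "finite H"
    by (rule finite_subset) (auto simp: triples_def)
  have "n choose 3 = card (triples n)"
    unfolding triples_def using n_subsets[of "{..<n}" 3] by simp
  also have "\<dots> \<le> card (\<Union>e\<in>H. D2_partners n e)"
    using saturated_D2_partners_cover[OF sat] \<open>finite H\<close>
    by (intro card_mono) (auto intro: finite_D2_partners)
  also have "\<dots> \<le> (\<Sum>e\<in>H. card (D2_partners n e))"
    using \<open>finite H\<close> by (rule card_UN_le)
  also have "\<dots> \<le> card H * (2 * n - 3)"
    using sum_bounded_above[of H "\<lambda>e. card (D2_partners n e)" "2 * n - 3"] H card_D2_partners
    by auto
  finally show ?thesis .
qed

lemma sat_cyc_le: "saturated n k F H \<Longrightarrow> sat_cyc n k F \<le> card H"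
  unfolding sat_cyc_def by (rule Least_le) blast

lemma sat_cyc_attained:
  assumes "saturated n k F H"
  obtains H' where "saturated n k F H'" "card H' = sat_cyc n k F"
  using LeastI_ex[of "\<lambda>m. \<exists>H. saturated n k F H \<and> card H = m"] assms
  unfolding sat_cyc_def by blast

lemma real_choose_three: "real (n choose 3) = real n * (real n - 1) * (real n - 2) / 6"
  by (simp add: binomial_gbinomial gbinomial_Suc eval_nat_numeral fact_Suc atLeast0_atMost_Suc)

lemma quadratic_lower_bound:
  fixes x h :: real
  assumes "2 \<le> x" "x * (x - 1) * (x - 2) / 6 \<le> h * (2 * x - 3)"
  shows "x\<^sup>2 / 12 - x \<le> h"
proof (rule ccontr)
  assume "\<not> ?thesis"
  then have "h * (2 * x - 3) < (x\<^sup>2 / 12 - x) * (2 * x - 3)"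
    using assms(1) by (intro mult_strict_right_mono) auto
  also have "\<dots> = x * (x - 1) * (x - 2) / 6 - x * (21 * x - 32) / 12"
    by (simp add: field_simps power2_eq_square)
  also have "\<dots> \<le> x * (x - 1) * (x - 2) / 6"
    using assms(1) by simp
  finally show False using assms(2) by simp
qed

theorem propositionA7:
  shows "\<exists>C::real. \<exists>N::nat. \<forall>n\<ge>N.
           real n ^ 2 / 12 - C * real n \<le> real (sat_cyc n 4 D2) \<and>
           real (sat_cyc n 4 D2) \<le> 5 * real n ^ 2 / 24 + C * real n"
proof (intro exI[of _ "1::real"] exI[of _ "30::nat"] allI impI)
  fix n :: nat assume n: "30 \<le> n"
  define a where "a = (n + 5) div 6"
  have a: "1 \<le> a" "5 * a < n" "n \<le> 6 * a" "6 * a \<le> n + 5"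
    using n unfolding a_def by linarith+
  have sat: "saturated n 4 D2 (gap_hypergraph n a)"
    using gap_hypergraph_saturated[OF a(1-3)] .
  obtain H where "saturated n 4 D2 H" "card H = sat_cyc n 4 D2"
    using sat_cyc_attained[OF sat] by blast
  then have "real (n choose 3) \<le> real (sat_cyc n 4 D2 * (2 * n - 3))"
    using saturated_D2_card_lower of_nat_le_iff by metis
  then have lower: "real n ^ 2 / 12 - 1 * real n \<le> real (sat_cyc n 4 D2)"
    using quadratic_lower_bound[of "real n"] n by (simp add: real_choose_three of_nat_diff)
  have "6 * sat_cyc n 4 D2 \<le> n * (6 * a)"
    using order_trans[OF sat_cyc_le[OF sat] card_gap_hypergraph] by simp
  also have "\<dots> \<le> n * (n + 5)"
    using a(4) by simp
  finally have "6 * real (sat_cyc n 4 D2) \<le> real n * (real n + 5)"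
    by (metis of_nat_add of_nat_le_iff of_nat_mult of_nat_numeral)
  then have "real (sat_cyc n 4 D2) \<le> 5 * real n ^ 2 / 24 + 1 * real n"
    unfolding power2_eq_square distrib_left using zero_le_square[of "real n"] by linarith
  with lower show "real n ^ 2 / 12 - 1 * real n \<le> real (sat_cyc n 4 D2) \<and>
      real (sat_cyc n 4 D2) \<le> 5 * real n ^ 2 / 24 + 1 * real n" ..
qed

end
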